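(* For every integer $n\ge2$, $\gamma_{tr3}(P_2\square P_n)=2n$.
   Context: $P_m$ denotes the directed path with vertex set $\{0,1,\dots,m-1\}$ and arcs $(i,i+1)$ for $0\le i\le m-2$. The Cartesian product $D_1\square D_2$ has vertex set $V(D_1)\times V(D_2)$, with an arc from $(x_1,y_1)$ to $(x_2,y_2)$ iff either $(x_1,x_2)$ is an arc of $D_1$ and $y_1=y_2$, or $x_1=x_2$ and $(y_1,y_2)$ is an arc of $D_2$. For a digraph $D$ and positive integer $k$, a $k$-rainbow dominating function on $D$ is $f:V(D)\to\mathcal P(\{1,\dots,k\})$ such that every $v$ with $f(v)=\emptyset$ satisfies $\bigcup_{u\in N^-(v)}f(u)=\{1,\dots,k\}$, where $N^-(v)$ is the set of in-neighbors of $v$; its weight is $\sum_v|f(v)|$. It is total if additionally the subdigraph induced by $\{v:f(v)\ne\emptyset\}$ has no isolated vertex (a vertex with neither in- nor out-neighbors in it). $\gamma_{trk}(D)$ is the minimum weight of a total $k$-rainbow dominating function. *)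

theory Defs
  imports Main
begin

record 'a digraph =
  verts :: "'a set"
  arcs  :: "('a \<times> 'a) set"

definition dipath :: "nat \<Rightarrow> nat digraph" where
  "dipath m = \<lparr> verts = {0..<m}, arcs = {(i, i+1) | i. i + 1 < m} \<rparr>"

definition cart_prod :: "'a digraph \<Rightarrow> 'b digraph \<Rightarrow> ('a \<times> 'b) digraph" where
  "cart_prod D1 D2 = \<lparr> verts = verts D1 \<times> verts D2,
     arcs = {((x1,y1),(x2,y2)) | x1 y1 x2 y2.
               y1 \<in> verts D2 \<and> y2 \<in> verts D2 \<and> x1 \<in> verts D1 \<and> x2 \<in> verts D1 \<and>
               (((x1,x2) \<in> arcs D1 \<and> y1 = y2) \<or> (x1 = x2 \<and> (y1,y2) \<in> arcs D2))} \<rparr>"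

definition in_nbrs :: "'a digraph \<Rightarrow> 'a \<Rightarrow> 'a set" where
  "in_nbrs D v = {u \<in> verts D. (u, v) \<in> arcs D}"

text \<open>k-rainbow dominating function (values outside the vertex set are irrelevant; we
  require them to be empty so that the weight is well-defined).\<close>
definition rainbow_dom :: "nat \<Rightarrow> 'a digraph \<Rightarrow> ('a \<Rightarrow> nat set) \<Rightarrow> bool" where
  "rainbow_dom k D f \<longleftrightarrow>
     (\<forall>v \<in> verts D. f v \<subseteq> {1..k}) \<and> (\<forall>v. v \<notin> verts D \<longrightarrow> f v = {}) \<and>
     (\<forall>v \<in> verts D. f v = {} \<longrightarrow> (\<Union>u \<in> in_nbrs D v. f u) = {1..k})"

text \<open>Total: the subdigraph induced by vertices with nonempty label has no isolated vertex.\<close>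
definition total_rainbow_dom :: "nat \<Rightarrow> 'a digraph \<Rightarrow> ('a \<Rightarrow> nat set) \<Rightarrow> bool" where
  "total_rainbow_dom k D f \<longleftrightarrow> rainbow_dom k D f \<and>
     (\<forall>v \<in> verts D. f v \<noteq> {} \<longrightarrow>
        (\<exists>u \<in> verts D. f u \<noteq> {} \<and> ((u, v) \<in> arcs D \<or> (v, u) \<in> arcs D)))"

definition rd_weight :: "'a digraph \<Rightarrow> ('a \<Rightarrow> nat set) \<Rightarrow> nat" where
  "rd_weight D f = (\<Sum>v \<in> verts D. card (f v))"

definition gamma_tr :: "nat \<Rightarrow> 'a digraph \<Rightarrow> nat" where
  "gamma_tr k D = (LEAST w. \<exists>f. total_rainbow_dom k D f \<and> rd_weight D f = w)"

end

theory Submission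
  imports Defs
begin

text \<open>Labelling every vertex with \<open>{1}\<close> is a total rainbow dominating function of weight \<open>2n\<close>.
  Conversely, for any \<open>k\<close>-rainbow dominating function with \<open>k \<ge> 3\<close>, an empty top vertex
  \<open>(0, y+1)\<close> forces \<open>|f(0,y)| = k\<close>, and an empty bottom vertex \<open>(1, y+1)\<close> forces
  \<open>|f(0,y+1)| + |f(1,y)| \<ge> k\<close>. So the surplus of column \<open>y\<close> over weight 2 pays for the empty
  vertices of column \<open>y+1\<close> that depend on it, and summing over the columns gives weight at
  least \<open>2n\<close>.\<close>

lemma rainbow_dom_finite:
  assumes "rainbow_dom k D f"
  shows "finite (f v)"
  using assms finite_subset[of "f v" "{1..k}"] unfolding rainbow_dom_def
  by (cases "v \<in> verts D") auto

lemma rainbow_dom_in_nbrs_Union: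
  assumes "rainbow_dom k D f" "v \<in> verts D" "f v = {}"
  shows "(\<Union>u \<in> in_nbrs D v. f u) = {1..k}"
  using assms unfolding rainbow_dom_def by blast

lemma gamma_tr_eqI:
  assumes "total_rainbow_dom k D f" "rd_weight D f = w"
    and "\<And>g. total_rainbow_dom k D g \<Longrightarrow> w \<le> rd_weight D g"
  shows "gamma_tr k D = w"
  unfolding gamma_tr_def
  by (rule Least_equality) (use assms in auto)

abbreviation ladder :: "nat \<Rightarrow> (nat \<times> nat) digraph" where
  "ladder n \<equiv> cart_prod (dipath 2) (dipath n)"

lemma verts_ladder: "verts (ladder n) = {0..<2} \<times> {0..<n}"
  by (simp add: cart_prod_def dipath_def)

lemma arcs_ladder_iff:
  "((x1, y1), (x2, y2)) \<in> arcs (ladder n) \<longleftrightarrow>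
     x1 < 2 \<and> x2 < 2 \<and> y1 < n \<and> y2 < n \<and>
     ((x2 = x1 + 1 \<and> y1 = y2) \<or> (x1 = x2 \<and> y2 = y1 + 1))"
  by (auto simp: cart_prod_def dipath_def)

lemma in_nbrs_ladder_0_0: "in_nbrs (ladder n) (0, 0) = {}"
  by (auto simp: in_nbrs_def verts_ladder arcs_ladder_iff)

lemma in_nbrs_ladder_0_Suc: "Suc y < n \<Longrightarrow> in_nbrs (ladder n) (0, Suc y) = {(0, y)}"
  by (auto simp: in_nbrs_def verts_ladder arcs_ladder_iff)

lemma in_nbrs_ladder_1_0: "0 < n \<Longrightarrow> in_nbrs (ladder n) (1, 0) = {(0, 0)}"
  by (auto simp: in_nbrs_def verts_ladder arcs_ladder_iff)

lemma in_nbrs_ladder_1_Suc: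
  "Suc y < n \<Longrightarrow> in_nbrs (ladder n) (1, Suc y) = {(0, Suc y), (1, y)}"
  by (auto simp: in_nbrs_def verts_ladder arcs_ladder_iff)

lemma rd_weight_ladder:
  "rd_weight (ladder n) f = (\<Sum>y<n. card (f (0, y)) + card (f (1, y)))"
proof -
  have "rd_weight (ladder n) f = (\<Sum>x\<in>{0..<2::nat}. \<Sum>y\<in>{0..<n}. card (f (x, y)))"
    unfolding rd_weight_def verts_ladder by (simp add: sum.cartesian_product)
  also have "\<dots> = (\<Sum>y<n. card (f (0, y)) + card (f (1, y)))"
    by (simp add: numeral_2_eq_2 sum.distrib atLeast0LessThan)
  finally show ?thesis .
qed

lemma ladder_rainbow_dom_corner:
  assumes "rainbow_dom k (ladder n) f" "0 < n" "0 < k"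
  shows "f (0, 0) \<noteq> {}"
  using rainbow_dom_in_nbrs_Union[OF assms(1), of "(0, 0)"] assms(2,3)
  by (auto simp: verts_ladder in_nbrs_ladder_0_0)

lemma ladder_rainbow_dom_top_empty:
  assumes "rainbow_dom k (ladder n) f" "Suc y < n" "f (0, Suc y) = {}"
  shows "card (f (0, y)) = k"
  using rainbow_dom_in_nbrs_Union[OF assms(1), of "(0, Suc y)"] assms(2,3)
  by (simp add: verts_ladder in_nbrs_ladder_0_Suc)

lemma ladder_rainbow_dom_bottom_empty_0:
  assumes "rainbow_dom k (ladder n) f" "0 < n" "f (1, 0) = {}"
  shows "card (f (0, 0)) = k"
proof -
  have "(\<Union>u \<in> in_nbrs (ladder n) (1, 0). f u) = {1..k}"
    using assms by (intro rainbow_dom_in_nbrs_Union) (auto simp: verts_ladder)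
  then show ?thesis unfolding in_nbrs_ladder_1_0[OF assms(2)] by simp
qed

lemma ladder_rainbow_dom_bottom_empty_Suc:
  assumes "rainbow_dom k (ladder n) f" "Suc y < n" "f (1, Suc y) = {}"
  shows "k \<le> card (f (0, Suc y)) + card (f (1, y))"
proof -
  have "(\<Union>u \<in> in_nbrs (ladder n) (1, Suc y). f u) = {1..k}"
    using assms by (intro rainbow_dom_in_nbrs_Union) (auto simp: verts_ladder)
  then have "f (0, Suc y) \<union> f (1, y) = {1..k}"
    unfolding in_nbrs_ladder_1_Suc[OF assms(2)] by simp
  then have "card (f (0, Suc y) \<union> f (1, y)) = k" by simp
  then show ?thesis using card_Un_le[of "f (0, Suc y)" "f (1, y)"] by simp
qed

lemma ladder_rainbow_dom_weight_ge:
  assumes rd: "rainbow_dom k (ladder n) f" and k: "3 \<le> k"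
  shows "2 * n \<le> rd_weight (ladder n) f"
proof -
  define a where "a y = card (f (0, y))" for y
  define b where "b y = card (f (1, y))" for y
  define E where "E y \<longleftrightarrow> y < n \<and> a y = 0" for y
  define H where "H y \<longleftrightarrow> y < n \<and> b y = 0 \<and> a y < 2" for y
  have empty_iff: "f v = {} \<longleftrightarrow> card (f v) = 0" for v
    using rainbow_dom_finite[OF rd] by simp
  have top: "k \<le> a m" if "E (Suc m)" for m
    using that ladder_rainbow_dom_top_empty[OF rd] by (simp add: E_def a_def empty_iff)
  have bottom: "2 \<le> b m" if "H (Suc m)" for m
    using that k ladder_rainbow_dom_bottom_empty_Suc[OF rd, of m]
    by (simp add: H_def a_def b_def empty_iff)
  have start: "\<not> E 0" "\<not> H 0"
    using k ladder_rainbow_dom_corner[OF rd] ladder_rainbow_dom_bottom_empty_0[OF rd]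
    by (auto simp: E_def H_def a_def b_def empty_iff[symmetric])
  have column: "2 + of_bool (E (Suc m)) + of_bool (H (Suc m))
      \<le> a m + b m + of_bool (E m) + of_bool (H m)" if "m < n" for m
    using that k top[of m] bottom[of m] by (auto simp: E_def H_def)
  \<comment> \<open>The empty vertices of the next column are already paid for by the prefix.\<close>
  have prefix: "2 * m + of_bool (E m) + of_bool (H m) \<le> (\<Sum>y<m. a y + b y)"
    if "m \<le> n" for m
    using that
  proof (induction m)
    case 0
    then show ?case using start by simp
  next
    case (Suc m)
    then show ?case using column[of m] by simp
  qed
  show ?thesis
    using prefix[of n] by (simp add: rd_weight_ladder a_def b_def)
qed

lemma ladder_total_rainbow_dom_const:
  assumes "0 < k"
  shows "total_rainbow_dom k (ladder n) (\<lambda>v. if v \<in> verts (ladder n) then {1} else {})"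
  unfolding total_rainbow_dom_def rainbow_dom_def
proof (intro conjI ballI allI impI)
  fix v assume v: "v \<in> verts (ladder n)"
  obtain x y where xy: "v = (x, y)" by force
  with v have "x < 2" "y < n" by (auto simp: verts_ladder)
  then show "\<exists>u\<in>verts (ladder n). (if u \<in> verts (ladder n) then {1} else {}) \<noteq> {} \<and>
      ((u, v) \<in> arcs (ladder n) \<or> (v, u) \<in> arcs (ladder n))"
    using xy by (intro bexI[of _ "(1 - x, y)"]) (auto simp: verts_ladder arcs_ladder_iff)
qed (use assms in auto)

theorem proposition4p5:
  fixes n :: nat
  assumes "n \<ge> 2"
  shows "gamma_tr 3 (cart_prod (dipath 2) (dipath n)) = 2 * n"
proof (rule gamma_tr_eqI)
  show "total_rainbow_dom 3 (ladder n) (\<lambda>v. if v \<in> verts (ladder n) then {1} else {})"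
    by (rule ladder_total_rainbow_dom_const) simp
  show "rd_weight (ladder n) (\<lambda>v. if v \<in> verts (ladder n) then {1} else {}) = 2 * n"
    by (simp add: rd_weight_def verts_ladder)
  show "2 * n \<le> rd_weight (ladder n) g" if "total_rainbow_dom 3 (ladder n) g" for g
    using that ladder_rainbow_dom_weight_ge[of 3 n g] by (simp add: total_rainbow_dom_def)
qed

end
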